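(* Let $F$ be a closed continuous frieze pattern with period $T$. Then there is a $T$-periodic function $k:\mathbb{R}\to\mathbb{R}$ such that, for all $x,y$, $$F_{xx}(x,y)=k(x)F(x,y),\qquad F_{yy}(x,y)=k(y)F(x,y),$$ i.e. $F$, as a function of $x$ alone or of $y$ alone, satisfies the same Hill equation $u''=k u$; moreover every solution of $u''=ku$ is $T$-antiperiodic, $u(t+T)=-u(t)$ (the monodromy is $-\mathrm{Id}$).
   Context: A closed continuous frieze pattern with period $T>0$ is a smooth function $F:\mathbb{R}^2\to\mathbb{R}$ satisfying the Liouville-type equation $F F_{xy}-F_xF_y=1$ on $\mathbb{R}^2$ together with the conditions: $F(x,x)=0$ and $F_y(x,x)=1$ for all $x$ (here $F_y(x,x)$ means $\partial F/\partial y$ evaluated at $(x,x)$); $F(x,y)>0$ whenever $x<y<x+T$; and $F(x+T,y)=F(x,y+T)=-F(x,y)$ for all $x,y$. *)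

theory Defs
  imports "HOL-Analysis.Analysis"
begin

definition pdx :: "(real \<Rightarrow> real \<Rightarrow> real) \<Rightarrow> real \<Rightarrow> real \<Rightarrow> real" where
  "pdx F x y = deriv (\<lambda>s. F s y) x"

definition pdy :: "(real \<Rightarrow> real \<Rightarrow> real) \<Rightarrow> real \<Rightarrow> real \<Rightarrow> real" where
  "pdy F x y = deriv (\<lambda>t. F x t) y"

inductive_set iter_partials :: "(real \<Rightarrow> real \<Rightarrow> real) \<Rightarrow> (real \<Rightarrow> real \<Rightarrow> real) set"
  for F where
  base: "F \<in> iter_partials F"
| dx: "G \<in> iter_partials F \<Longrightarrow> pdx G \<in> iter_partials F"
| dy: "G \<in> iter_partials F \<Longrightarrow> pdy G \<in> iter_partials F"

definition smooth2 :: "(real \<Rightarrow> real \<Rightarrow> real) \<Rightarrow> bool" where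
  "smooth2 F \<longleftrightarrow> (\<forall>G \<in> iter_partials F.
      (\<forall>x y. (\<lambda>s. G s y) differentiable (at x) \<and> (\<lambda>t. G x t) differentiable (at y)) \<and>
      continuous_on UNIV (\<lambda>p. G (fst p) (snd p)))"

definition closed_frieze :: "real \<Rightarrow> (real \<Rightarrow> real \<Rightarrow> real) \<Rightarrow> bool" where
  "closed_frieze T F \<longleftrightarrow> T > 0 \<and> smooth2 F \<and>
     (\<forall>x y. F x y * pdy (pdx F) x y - pdx F x y * pdy F x y = 1) \<and>
     (\<forall>x. F x x = 0) \<and> (\<forall>x. pdy F x x = 1) \<and>
     (\<forall>x y. x < y \<and> y < x + T \<longrightarrow> F x y > 0) \<and>
     (\<forall>x y. F (x + T) y = - F x y) \<and> (\<forall>x y. F x (y + T) = - F x y)"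

end

theory Submission
  imports Defs
begin

text \<open>Differentiating the Liouville equation \<open>F F\<^sub>x\<^sub>y - F\<^sub>x F\<^sub>y = 1\<close> in \<open>x\<close> gives
  \<open>F F\<^sub>x\<^sub>x\<^sub>y = F\<^sub>x\<^sub>x F\<^sub>y\<close>: for fixed \<open>x\<close> the functions \<open>F\<^sub>x\<^sub>x(x,\<cdot>)\<close> and \<open>F(x,\<cdot>)\<close>
  have vanishing Wronskian. Since \<open>F(x,\<cdot>)\<close> is positive on \<open>(x, x + T)\<close> and both are
  \<open>T\<close>-antiperiodic, \<open>F\<^sub>x\<^sub>x = k(x) F\<close>; likewise \<open>F\<^sub>y\<^sub>y = l(y) F\<close>. On the diagonal
  \<open>F = 0\<close>, \<open>F\<^sub>y = 1\<close>, hence \<open>F\<^sub>x = -1\<close> and \<open>F\<^sub>x\<^sub>y = 0\<close>; differentiating \<open>F\<^sub>x\<^sub>y\<close> along the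
  diagonal then gives \<open>k - l = 0\<close>. Finally, for a solution \<open>u\<close> of \<open>u'' = k u\<close> the Wronskian
  of \<open>u\<close> and \<open>F(t,\<cdot>)\<close> is constant, and evaluating it at \<open>t\<close> and \<open>t + T\<close> gives
  \<open>-u(t) = u(t + T)\<close>.\<close>

lemma has_real_derivative_antiperiodic:
  fixes f f' :: "real \<Rightarrow> real"
  assumes anti: "\<And>s. f (s + T) = - f s"
    and der: "\<And>s. (f has_real_derivative f' s) (at s)"
  shows "f' (s + T) = - f' s"
proof -
  have "((\<lambda>s. f (s + T)) has_real_derivative f' (s + T)) (at s)"
    using der[of "s + T"] DERIV_shift by blast
  moreover have "((\<lambda>s. f (s + T)) has_real_derivative - f' s) (at s)"
    unfolding anti by (rule DERIV_minus[OF der])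
  ultimately show ?thesis
    by (rule DERIV_unique)
qed

lemma has_real_derivative_const_fun_eq_0:
  fixes f :: "real \<Rightarrow> real"
  assumes "\<And>s. f s = c" and "(f has_real_derivative D) (at x)"
  shows "D = 0"
proof -
  have "f = (\<lambda>_. c)"
    using assms(1) by auto
  then show ?thesis
    using assms(2) DERIV_const DERIV_unique by metis
qed

lemma second_difference_mean_value:
  fixes G Gx Gxy :: "real \<Rightarrow> real \<Rightarrow> real"
  assumes Gx: "\<And>s t. ((\<lambda>s. G s t) has_real_derivative Gx s t) (at s)"
    and Gxy: "\<And>s t. ((\<lambda>t. Gx s t) has_real_derivative Gxy s t) (at t)"
    and h: "h > 0"
  obtains \<xi> \<eta> where "x < \<xi>" "\<xi> < x + h" "y < \<eta>" "\<eta> < y + h"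
    "G (x + h) (y + h) - G (x + h) y - G x (y + h) + G x y = h\<^sup>2 * Gxy \<xi> \<eta>"
proof -
  have "((\<lambda>s. G s (y + h) - G s y) has_real_derivative Gx s (y + h) - Gx s y) (at s)" for s
    by (intro derivative_intros Gx)
  then obtain \<xi> where \<xi>: "x < \<xi>" "\<xi> < x + h"
    "G (x + h) (y + h) - G (x + h) y - (G x (y + h) - G x y) = h * (Gx \<xi> (y + h) - Gx \<xi> y)"
    using MVT2[of x "x + h" "\<lambda>s. G s (y + h) - G s y" "\<lambda>s. Gx s (y + h) - Gx s y"] h by auto
  obtain \<eta> where \<eta>: "y < \<eta>" "\<eta> < y + h" "Gx \<xi> (y + h) - Gx \<xi> y = h * Gxy \<xi> \<eta>"
    using MVT2[of y "y + h" "Gx \<xi>" "Gxy \<xi>"] Gxy h by auto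
  show thesis
    by (rule that[OF \<xi>(1,2) \<eta>(1,2)]) (use \<xi>(3) \<eta>(3) in \<open>simp add: power2_eq_square algebra_simps\<close>)
qed

lemma mixed_partials_commute:
  fixes G Gx Gy Gxy Gyx :: "real \<Rightarrow> real \<Rightarrow> real"
  assumes Gx: "\<And>s t. ((\<lambda>s. G s t) has_real_derivative Gx s t) (at s)"
    and Gy: "\<And>s t. ((\<lambda>t. G s t) has_real_derivative Gy s t) (at t)"
    and Gxy: "\<And>s t. ((\<lambda>t. Gx s t) has_real_derivative Gxy s t) (at t)"
    and Gyx: "\<And>s t. ((\<lambda>s. Gy s t) has_real_derivative Gyx s t) (at s)"
    and cont_xy: "isCont (\<lambda>p. Gxy (fst p) (snd p)) (x, y)"
    and cont_yx: "isCont (\<lambda>p. Gyx (fst p) (snd p)) (x, y)"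
  shows "Gxy x y = Gyx x y"
proof -
  have "\<bar>Gxy x y - Gyx x y\<bar> \<le> e" if "e > 0" for e
  proof -
    obtain d1 where "d1 > 0" and d1: "\<And>p. dist p (x, y) < d1 \<Longrightarrow> \<bar>Gxy (fst p) (snd p) - Gxy x y\<bar> < e/2"
      using cont_xy \<open>e > 0\<close> unfolding continuous_at_eps_delta dist_real_def
      by (metis fst_conv half_gt_zero snd_conv)
    obtain d2 where "d2 > 0" and d2: "\<And>p. dist p (x, y) < d2 \<Longrightarrow> \<bar>Gyx (fst p) (snd p) - Gyx x y\<bar> < e/2"
      using cont_yx \<open>e > 0\<close> unfolding continuous_at_eps_delta dist_real_def
      by (metis fst_conv half_gt_zero snd_conv)
    define h where "h = min d1 d2 / 2"
    have "h > 0"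
      using \<open>d1 > 0\<close> \<open>d2 > 0\<close> by (simp add: h_def)
    have near: "dist (a, b) (x, y) < min d1 d2" if "\<bar>a - x\<bar> < h" "\<bar>b - y\<bar> < h" for a b
    proof -
      have "dist (a, b) (x, y) \<le> \<bar>a - x\<bar> + \<bar>b - y\<bar>"
        using norm_Pair_le[of "a - x" "b - y"] by (simp add: dist_norm)
      then show ?thesis
        using that by (simp add: h_def)
    qed
    obtain \<xi> \<eta> where \<xi>\<eta>: "x < \<xi>" "\<xi> < x + h" "y < \<eta>" "\<eta> < y + h"
      and D: "G (x + h) (y + h) - G (x + h) y - G x (y + h) + G x y = h\<^sup>2 * Gxy \<xi> \<eta>"
      using second_difference_mean_value[OF Gx Gxy \<open>h > 0\<close>] .
    obtain \<eta>' \<xi>' where \<xi>\<eta>': "y < \<eta>'" "\<eta>' < y + h" "x < \<xi>'" "\<xi>' < x + h"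
      and D': "G (x + h) (y + h) - G x (y + h) - G (x + h) y + G x y = h\<^sup>2 * Gyx \<xi>' \<eta>'"
      using second_difference_mean_value[of "\<lambda>t s. G s t" "\<lambda>t s. Gy s t" "\<lambda>t s. Gyx s t",
          OF Gy Gyx \<open>h > 0\<close>] .
    have "h\<^sup>2 * Gxy \<xi> \<eta> = h\<^sup>2 * Gyx \<xi>' \<eta>'"
      using D D' by linarith
    then have "Gxy \<xi> \<eta> = Gyx \<xi>' \<eta>'"
      using \<open>h > 0\<close> by simp
    moreover have "\<bar>Gxy \<xi> \<eta> - Gxy x y\<bar> < e/2"
      using d1[of "(\<xi>, \<eta>)"] near[of \<xi> \<eta>] \<xi>\<eta> by simp
    moreover have "\<bar>Gyx \<xi>' \<eta>' - Gyx x y\<bar> < e/2"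
      using d2[of "(\<xi>', \<eta>')"] near[of \<xi>' \<eta>'] \<xi>\<eta>' by simp
    ultimately show ?thesis
      by linarith
  qed
  then show ?thesis
    using field_le_epsilon[of "\<bar>Gxy x y - Gyx x y\<bar>" 0] by simp
qed

lemma has_real_derivative_diagonal:
  fixes G Gy :: "real \<Rightarrow> real \<Rightarrow> real"
  assumes Gx: "((\<lambda>s. G s x) has_real_derivative Gx) (at x)"
    and Gy: "\<And>s t. ((\<lambda>t. G s t) has_real_derivative Gy s t) (at t)"
    and cont: "isCont (\<lambda>p. Gy (fst p) (snd p)) (x, x)"
  shows "((\<lambda>t. G t t) has_real_derivative Gx + Gy x x) (at x)"
proof -
  have "continuous (at (x, x) within UNIV \<times> UNIV) (\<lambda>(s, t). blinfun_mult_right (Gy s t))"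
    using isCont_o2[OF cont linear_continuous_at[OF bounded_linear_blinfun_mult_right]]
    by (simp add: case_prod_beta')
  then have joint: "((\<lambda>(s, t). G s t) has_derivative (\<lambda>(hs, ht). Gx * hs + Gy x x * ht)) (at (x, x))"
    using has_derivative_partialsI[where f = G and x = x and y = x and X = UNIV and Y = UNIV
        and fy = "\<lambda>s t. blinfun_mult_right (Gy s t)",
        OF has_field_derivative_imp_has_derivative[OF Gx]]
      has_field_derivative_imp_has_derivative[OF Gy]
    by simp
  have "((\<lambda>t. (t, t)) has_derivative (\<lambda>h. (h, h))) (at x)"
    by (auto intro!: derivative_eq_intros)
  from diff_chain_at[OF this joint]
  have "((\<lambda>t. G t t) has_derivative (\<lambda>h. Gx * h + Gy x x * h)) (at x)"
    by (simp add: o_def)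
  then show ?thesis
    unfolding has_field_derivative_def
    by (rule has_derivative_eq_rhs) (simp add: fun_eq_iff algebra_simps)
qed

lemma periodic_pred_extend:
  fixes P :: "real \<Rightarrow> bool"
  assumes "T > 0" and periodic: "\<And>t. P (t + T) \<longleftrightarrow> P t"
    and base: "\<And>t. a \<le> t \<Longrightarrow> t < a + T \<Longrightarrow> P t"
  shows "P t"
proof -
  have shift: "P (t + of_int n * T) \<longleftrightarrow> P t" for n
  proof (induction n rule: int_induct[where k = 0])
    case (step1 i)
    then show ?case
      using periodic[of "t + of_int i * T"] by (simp add: algebra_simps)
  next
    case (step2 i)
    then show ?case
      using periodic[of "t + of_int (i - 1) * T"] by (simp add: algebra_simps)
  qed simp
  define n where "n = \<lfloor>(t - a) / T\<rfloor>"
  have "of_int n \<le> (t - a) / T" "(t - a) / T < of_int n + 1"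
    unfolding n_def by linarith+
  then have "of_int n * T \<le> t - a" "t - a < (of_int n + 1) * T"
    using \<open>T > 0\<close> by (simp_all add: field_simps)
  then have "P (t + of_int (- n) * T)"
    by (intro base) (simp_all add: algebra_simps)
  then show ?thesis
    using shift by blast
qed

lemma zero_wronskian_proportional:
  fixes f f' g g' :: "real \<Rightarrow> real"
  assumes "T > 0"
    and f: "\<And>t. (f has_real_derivative f' t) (at t)"
    and g: "\<And>t. (g has_real_derivative g' t) (at t)"
    and wronskian: "\<And>t. g t * f' t = f t * g' t"
    and g_pos: "\<And>t. a < t \<Longrightarrow> t < a + T \<Longrightarrow> g t > 0"
    and f_anti: "\<And>t. f (t + T) = - f t" and g_anti: "\<And>t. g (t + T) = - g t"
  shows "f t = f (a + T/2) / g (a + T/2) * g t"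
proof -
  define c where "c = f (a + T/2) / g (a + T/2)"
  define h where "h t = f t - c * g t" for t
  have "\<exists>c'. \<forall>t\<in>{a<..<a + T}. f t / g t = c'"
  proof (rule has_field_derivative_zero_constant)
    fix t assume t: "t \<in> {a<..<a + T}"
    then have "g t \<noteq> 0"
      using g_pos by force
    then have "((\<lambda>t. f t / g t) has_real_derivative (f' t * g t - f t * g' t) / (g t * g t)) (at t)"
      by (rule DERIV_divide[OF f g])
    then show "((\<lambda>t. f t / g t) has_real_derivative 0) (at t within {a<..<a + T})"
      using wronskian[of t] by (simp add: has_field_derivative_at_within algebra_simps)
  qed simp
  then obtain c' where c': "\<And>t. a < t \<Longrightarrow> t < a + T \<Longrightarrow> f t / g t = c'"
    by auto
  have "c' = c"
    using c'[of "a + T/2"] \<open>T > 0\<close> by (simp add: c_def)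
  have h_inside: "h t = 0" if "a < t" "t < a + T" for t
  proof -
    have "f t / g t = c"
      using c'[OF that] \<open>c' = c\<close> by simp
    then show ?thesis
      using g_pos[OF that] by (auto simp: h_def divide_eq_eq)
  qed
  have "isCont h a"
    unfolding h_def using DERIV_isCont[OF f] DERIV_isCont[OF g] by (intro continuous_intros)
  then have "(h \<longlongrightarrow> h a) (at_right a)"
    by (simp add: isCont_def filterlim_at_split)
  moreover have "eventually (\<lambda>t. h t = 0) (at_right a)"
    using eventually_at_right_real[of a "a + T"] \<open>T > 0\<close> h_inside by (auto elim: eventually_mono)
  then have "(h \<longlongrightarrow> 0) (at_right a)"
    by (simp add: tendsto_eventually)
  ultimately have "h a = 0"
    using tendsto_unique[OF trivial_limit_at_right_real] by blast
  have "h t = 0"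
  proof (rule periodic_pred_extend[OF \<open>T > 0\<close>, where P = "\<lambda>t. h t = 0" and a = a])
    show "h (t + T) = 0 \<longleftrightarrow> h t = 0" for t
      by (auto simp: h_def f_anti g_anti)
    show "h t = 0" if "a \<le> t" "t < a + T" for t
      using \<open>h a = 0\<close> h_inside that by (cases "t = a") auto
  qed
  then show ?thesis
    by (simp add: h_def c_def)
qed

lemma hill_wronskian_constant:
  fixes k u u' v v' :: "real \<Rightarrow> real"
  assumes u: "\<And>t. (u has_real_derivative u' t) (at t)" "\<And>t. (u' has_real_derivative k t * u t) (at t)"
    and v: "\<And>t. (v has_real_derivative v' t) (at t)" "\<And>t. (v' has_real_derivative k t * v t) (at t)"
  shows "v s * u' s - v' s * u s = v t * u' t - v' t * u t"
proof -
  have "((\<lambda>t. v t * u' t - v' t * u t) has_real_derivative 0) (at t)" for t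
    by (auto intro!: derivative_eq_intros u v simp: algebra_simps)
  then show ?thesis
    using DERIV_isconst_all by blast
qed

lemma smooth2_has_pdx:
  assumes "smooth2 F" "G \<in> iter_partials F"
  shows "((\<lambda>s. G s y) has_real_derivative pdx G x y) (at x)"
  using assms unfolding smooth2_def pdx_def by (simp add: DERIV_deriv_iff_real_differentiable)

lemma smooth2_has_pdy:
  assumes "smooth2 F" "G \<in> iter_partials F"
  shows "((\<lambda>t. G x t) has_real_derivative pdy G x y) (at y)"
  using assms unfolding smooth2_def pdy_def by (simp add: DERIV_deriv_iff_real_differentiable)

lemma smooth2_isCont:
  assumes "smooth2 F" "G \<in> iter_partials F"
  shows "isCont (\<lambda>p. G (fst p) (snd p)) p"
  using assms unfolding smooth2_def by (meson continuous_on_eq_continuous_at open_UNIV UNIV_I)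

lemmas [simp] = iter_partials.intros

locale closed_frieze_pattern =
  fixes T :: real and F :: "real \<Rightarrow> real \<Rightarrow> real"
  assumes closed_frieze: "closed_frieze T F"
begin

lemma period_pos: "T > 0"
  and smooth: "smooth2 F"
  and liouville: "F x y * pdy (pdx F) x y - pdx F x y * pdy F x y = 1"
  and F_diagonal: "F x x = 0"
  and pdy_F_diagonal: "pdy F x x = 1"
  and F_pos: "x < y \<Longrightarrow> y < x + T \<Longrightarrow> F x y > 0"
  and F_antiperiodic_x: "F (x + T) y = - F x y"
  and F_antiperiodic_y: "F x (y + T) = - F x y"
  using closed_frieze unfolding closed_frieze_def by auto

lemma has_pdx: "G \<in> iter_partials F \<Longrightarrow> ((\<lambda>s. G s y) has_real_derivative pdx G x y) (at x)"
  using smooth by (rule smooth2_has_pdx)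

lemma has_pdy: "G \<in> iter_partials F \<Longrightarrow> ((\<lambda>t. G x t) has_real_derivative pdy G x y) (at y)"
  using smooth by (rule smooth2_has_pdy)

lemma pdx_pdy_commute:
  assumes "G \<in> iter_partials F"
  shows "pdx (pdy G) = pdy (pdx G)"
proof (intro ext)
  fix x y
  show "pdx (pdy G) x y = pdy (pdx G) x y"
    using assms
    by (intro mixed_partials_commute[where G = G and Gx = "pdx G" and Gy = "pdy G", symmetric])
      (simp_all add: has_pdx has_pdy smooth2_isCont[OF smooth])
qed

lemma iter_partials_antiperiodic:
  assumes "G \<in> iter_partials F"
  shows "G (x + T) y = - G x y \<and> G x (y + T) = - G x y"
  using assms
proof (induction arbitrary: x y)
  case base
  then show ?case
    using F_antiperiodic_x F_antiperiodic_y by blast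
next
  case (dx G)
  have "pdx G (x + T) y = - pdx G x y"
    using has_real_derivative_antiperiodic[where f = "\<lambda>s. G s y", OF _ has_pdx[OF dx.hyps]] dx.IH
    by blast
  moreover have "pdx G x (y + T) = - pdx G x y"
    using DERIV_minus[OF has_pdx[OF dx.hyps]] dx.IH unfolding pdx_def by (simp add: DERIV_imp_deriv)
  ultimately show ?case
    by blast
next
  case (dy G)
  have "pdy G x (y + T) = - pdy G x y"
    using has_real_derivative_antiperiodic[where f = "\<lambda>t. G x t", OF _ has_pdy[OF dy.hyps]] dy.IH
    by blast
  moreover have "pdy G (x + T) y = - pdy G x y"
  proof -
    have "G (x + T) = (\<lambda>t. - G x t)"
      using dy.IH by auto
    then show ?thesis
      using DERIV_imp_deriv[OF DERIV_minus[OF has_pdy[OF dy.hyps]]] unfolding pdy_def by simp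
  qed
  ultimately show ?case
    by blast
qed

lemma diagonal_derivative:
  assumes "G \<in> iter_partials F"
  shows "((\<lambda>t. G t t) has_real_derivative pdx G x x + pdy G x x) (at x)"
  using has_real_derivative_diagonal[OF has_pdx[OF assms] has_pdy[OF assms]]
    smooth2_isCont[OF smooth iter_partials.dy[OF assms]] by blast

lemma diagonal_partials_cancel:
  assumes "G \<in> iter_partials F" and "\<And>t. G t t = c"
  shows "pdx G x x + pdy G x x = 0"
  using has_real_derivative_const_fun_eq_0[OF assms(2) diagonal_derivative[OF assms(1)]] .

lemma pdx_F_diagonal: "pdx F x x = -1"
  using diagonal_partials_cancel[OF iter_partials.base F_diagonal, of x] pdy_F_diagonal[of x]
  by simp

lemma pdxx_F_wronskian: "F x y * pdy (pdx (pdx F)) x y = pdx (pdx F) x y * pdy F x y"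
proof -
  have Fx: "pdx F \<in> iter_partials F" and Fy: "pdy F \<in> iter_partials F"
    and Fxy: "pdy (pdx F) \<in> iter_partials F"
    by simp_all
  note derivative = DERIV_diff[OF
      DERIV_mult[OF has_pdx[OF iter_partials.base, where y = y and x = x] has_pdx[OF Fxy, where y = y]]
      DERIV_mult[OF has_pdx[OF Fx, where y = y] has_pdx[OF Fy, where y = y]]]
  have "pdx F x y * pdy (pdx F) x y + pdx (pdy (pdx F)) x y * F x y
      - (pdx (pdx F) x y * pdy F x y + pdx (pdy F) x y * pdx F x y) = 0"
    by (rule has_real_derivative_const_fun_eq_0[OF _ derivative]) (rule liouville)
  then show ?thesis
    unfolding pdx_pdy_commute[OF iter_partials.base] pdx_pdy_commute[OF Fx]
    by (simp add: algebra_simps)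
qed

lemma pdyy_F_wronskian: "F x y * pdx (pdy (pdy F)) x y = pdy (pdy F) x y * pdx F x y"
proof -
  have Fx: "pdx F \<in> iter_partials F" and Fy: "pdy F \<in> iter_partials F"
    and Fxy: "pdy (pdx F) \<in> iter_partials F"
    by simp_all
  have "pdy (pdy (pdx F)) = pdx (pdy (pdy F))"
    using pdx_pdy_commute[OF iter_partials.base] pdx_pdy_commute[OF Fy] by metis
  note derivative = DERIV_diff[OF
      DERIV_mult[OF has_pdy[OF iter_partials.base, where x = x and y = y] has_pdy[OF Fxy, where x = x]]
      DERIV_mult[OF has_pdy[OF Fx, where x = x] has_pdy[OF Fy, where x = x]]]
  have "pdy F x y * pdy (pdx F) x y + pdy (pdy (pdx F)) x y * F x y
      - (pdy (pdx F) x y * pdy F x y + pdy (pdy F) x y * pdx F x y) = 0"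
    by (rule has_real_derivative_const_fun_eq_0[OF _ derivative]) (rule liouville)
  then show ?thesis
    unfolding \<open>pdy (pdy (pdx F)) = pdx (pdy (pdy F))\<close>
    by (simp add: algebra_simps)
qed

definition potential :: "real \<Rightarrow> real"
  where "potential x = pdx (pdx F) x (x + T/2) / F x (x + T/2)"

lemma pdxx_F: "pdx (pdx F) x y = potential x * F x y"
  unfolding potential_def
proof (rule zero_wronskian_proportional[OF period_pos])
  show "(pdx (pdx F) x has_real_derivative pdy (pdx (pdx F)) x t) (at t)"
    "(F x has_real_derivative pdy F x t) (at t)" for t
    by (simp_all add: has_pdy)
  show "F x t * pdy (pdx (pdx F)) x t = pdx (pdx F) x t * pdy F x t" for t
    by (rule pdxx_F_wronskian)
  show "x < t \<Longrightarrow> t < x + T \<Longrightarrow> 0 < F x t" for t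
    by (rule F_pos)
  show "pdx (pdx F) x (t + T) = - pdx (pdx F) x t" "F x (t + T) = - F x t" for t
    using iter_partials_antiperiodic[of "pdx (pdx F)"] F_antiperiodic_y by simp_all
qed

lemma pdyy_F_proportional: "\<exists>l. \<forall>x y. pdy (pdy F) x y = l y * F x y"
proof (intro exI allI)
  fix x y
  let ?a = "y - T"
  show "pdy (pdy F) x y = pdy (pdy F) (?a + T/2) y / F (?a + T/2) y * F x y"
  proof (rule zero_wronskian_proportional[OF period_pos, where f = "\<lambda>s. pdy (pdy F) s y"
        and g = "\<lambda>s. F s y"])
    show "((\<lambda>s. pdy (pdy F) s y) has_real_derivative pdx (pdy (pdy F)) s y) (at s)"
      "((\<lambda>s. F s y) has_real_derivative pdx F s y) (at s)" for s
      by (simp_all add: has_pdx)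
    show "F s y * pdx (pdy (pdy F)) s y = pdy (pdy F) s y * pdx F s y" for s
      by (rule pdyy_F_wronskian)
    show "?a < s \<Longrightarrow> s < ?a + T \<Longrightarrow> 0 < F s y" for s
      by (simp add: F_pos)
    show "pdy (pdy F) (s + T) y = - pdy (pdy F) s y" "F (s + T) y = - F s y" for s
      using iter_partials_antiperiodic[of "pdy (pdy F)"] F_antiperiodic_x by simp_all
  qed
qed

lemma pdyy_F: "pdy (pdy F) x y = potential y * F x y"
proof -
  obtain l where l: "\<And>x y. pdy (pdy F) x y = l y * F x y"
    using pdyy_F_proportional by blast
  have pdxxy: "pdy (pdx (pdx F)) x y = potential x * pdy F x y" for x y
  proof -
    have "pdx (pdx F) x = (\<lambda>t. potential x * F x t)"
      by (simp add: pdxx_F fun_eq_iff)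
    then show ?thesis
      using DERIV_imp_deriv[OF DERIV_cmult[OF has_pdy[OF iter_partials.base, where x = x and y = y],
            where c = "potential x"]]
      unfolding pdy_def by simp
  qed
  have pdyyx: "pdx (pdy (pdy F)) x y = l y * pdx F x y" for x y
  proof -
    have "(\<lambda>s. pdy (pdy F) s y) = (\<lambda>s. l y * F s y)"
      by (simp add: l)
    then show ?thesis
      using DERIV_imp_deriv[OF DERIV_cmult[OF has_pdx[OF iter_partials.base, where x = x and y = y],
            where c = "l y"]]
      unfolding pdx_def by simp
  qed
  have "pdy (pdx F) t t = 0" for t
    using diagonal_partials_cancel[of "pdx F", OF _ pdx_F_diagonal, of t] pdxx_F[of t t] F_diagonal[of t]
    by simp
  then have diagonal: "pdx (pdy (pdx F)) z z + pdy (pdy (pdx F)) z z = 0" for z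
    by (rule diagonal_partials_cancel[rotated]) simp
  have "pdx (pdy (pdx F)) = pdy (pdx (pdx F))" "pdy (pdy (pdx F)) = pdx (pdy (pdy F))"
    using pdx_pdy_commute[of F] pdx_pdy_commute[of "pdx F"] pdx_pdy_commute[of "pdy F"] by simp_all
  then have "l z = potential z" for z
    using diagonal[of z] pdxxy[of z z] pdyyx[of z z] pdy_F_diagonal[of z] pdx_F_diagonal[of z] by simp
  then show ?thesis
    using l by simp
qed

lemma potential_periodic: "potential (x + T) = potential x"
proof -
  have "F x (x + T/2) > 0"
    using F_pos period_pos by simp
  moreover have "pdx (pdx F) (x + T) (x + T/2) = - pdx (pdx F) x (x + T/2)"
    using iter_partials_antiperiodic[of "pdx (pdx F)"] by simp
  ultimately show ?thesis
    using pdxx_F[of "x + T" "x + T/2"] pdxx_F[of x "x + T/2"] F_antiperiodic_x[of x "x + T/2"] by simp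
qed

lemma hill_solution_antiperiodic:
  assumes "\<And>t. (u has_real_derivative u' t) (at t)"
    and "\<And>t. (u' has_real_derivative potential t * u t) (at t)"
  shows "u (t + T) = - u t"
proof -
  have "(pdy F t has_real_derivative potential s * F t s) (at s)" for s
    using has_pdy[of "pdy F" t s] by (simp add: pdyy_F)
  then have "F t s * u' s - pdy F t s * u s = F t t * u' t - pdy F t t * u t" for s
    by (rule hill_wronskian_constant[OF assms has_pdy[OF iter_partials.base]])
  from this[of "t + T"] show ?thesis
    using F_antiperiodic_y[of t t] iter_partials_antiperiodic[of "pdy F" t t]
    by (simp add: F_diagonal pdy_F_diagonal)
qed

end

theorem mainTheorem2:
  fixes T :: real and F :: "real \<Rightarrow> real \<Rightarrow> real"
  assumes "closed_frieze T F"
  shows "\<exists>k :: real \<Rightarrow> real. (\<forall>x. k (x + T) = k x) \<and>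
     (\<forall>x y. pdx (pdx F) x y = k x * F x y \<and> pdy (pdy F) x y = k y * F x y) \<and>
     (\<forall>u u'. (\<forall>t. (u has_real_derivative u' t) (at t) \<and>
                   (u' has_real_derivative k t * u t) (at t))
             \<longrightarrow> (\<forall>t. u (t + T) = - u t))"
proof -
  interpret closed_frieze_pattern T F
    using assms by unfold_locales
  show ?thesis
    using potential_periodic pdxx_F pdyy_F hill_solution_antiperiodic by blast
qed

end
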